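(* Let $n\ge 3$ and let $q$ be a real number with $0<q\le 1/6$. Consider the Markov chain on $\{0,1,\dots,n-1\}$ with $n\times n$ transition probability matrix $\mathbf P(q)=(P_{ij})$ given by: $P_{00}=1-q$, $P_{01}=q$; $P_{10}=5q$, $P_{11}=1-6q$, $P_{12}=q$; for $2\le i\le n-2$: $P_{i0}=4q$, $P_{i,i-1}=q$, $P_{ii}=1-6q$, $P_{i,i+1}=q$; $P_{n-1,0}=5q$, $P_{n-1,n-2}=q$, $P_{n-1,n-1}=1-6q$; all other entries $0$. Then the steady state probability vector $\vec\pi=(\pi_0,\dots,\pi_{n-1})$ (the unique probability vector with $\vec\pi=\vec\pi\mathbf P(q)$) is given by $\pi_i=\dfrac{2B_{n-i}}{b_{n+1}}=\dfrac{B_{n-i}}{\sum_{l=1}^n B_l}$ for $i=0,1,\dots,n-1$; in particular it does not depend on $q$.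
   Context: The balancing numbers $B_m$ are defined by $B_0=0$, $B_1=1$, $B_{m+1}=6B_m-B_{m-1}$. The cobalancing numbers $b_m$ are defined by $b_0=0$, $b_1=0$, $b_{m+1}=6b_m-b_{m-1}+2$. *)

theory Defs
  imports Complex_Main
begin

fun bal :: "nat \<Rightarrow> int" where
  "bal 0 = 0"
| "bal (Suc 0) = 1"
| "bal (Suc (Suc m)) = 6 * bal (Suc m) - bal m"

fun cobal :: "nat \<Rightarrow> int" where
  "cobal 0 = 0"
| "cobal (Suc 0) = 0"
| "cobal (Suc (Suc m)) = 6 * cobal (Suc m) - cobal m + 2"

text \<open>The n x n transition matrix P(q), indices i, j in {0..n-1}
  (entries outside this range are irrelevant and set to 0).\<close>
definition trans_mat :: "nat \<Rightarrow> real \<Rightarrow> nat \<Rightarrow> nat \<Rightarrow> real" where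
  "trans_mat n q i j =
    (if i = 0 then (if j = 0 then 1 - q else if j = 1 then q else 0)
     else if i = 1 then (if j = 0 then 5*q else if j = 1 then 1 - 6*q else if j = 2 then q else 0)
     else if i \<le> n - 2 then
       (if j = 0 then 4*q else if j = i - 1 then q else if j = i then 1 - 6*q
        else if j = i + 1 then q else 0)
     else if i = n - 1 then
       (if j = 0 then 5*q else if j = n - 2 then q else if j = n - 1 then 1 - 6*q else 0)
     else 0)"

definition prob_vec :: "nat \<Rightarrow> (nat \<Rightarrow> real) \<Rightarrow> bool" where
  "prob_vec n p \<longleftrightarrow> (\<forall>i<n. 0 \<le> p i) \<and> (\<Sum>i<n. p i) = 1"

definition stationary :: "nat \<Rightarrow> (nat \<Rightarrow> nat \<Rightarrow> real) \<Rightarrow> (nat \<Rightarrow> real) \<Rightarrow> bool" where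
  "stationary n P p \<longleftrightarrow> (\<forall>j<n. p j = (\<Sum>i<n. p i * P i j))"

end

theory Submission
  imports Defs
begin

(*
  The balance equation of P(q) at a column j >= 1 involves only the neighbours j - 1, j, j + 1;
  since q > 0 it reduces to pi(j-1) = 6 pi(j) - pi(j+1) (reading pi(n) as 0). Read backwards
  from pi(n-1) this is the balancing recurrence, so pi(i) = pi(n-1) B(n-i) whatever q is.
  Conversely the vector (B(n-i)) also satisfies the balance equation at column 0, which comes
  down to the identity 4 (B(1) + ... + B(m)) = B(m+1) - B(m) - 1. Normalising and using
  b(m+1) = 2 (B(1) + ... + B(m)) gives the theorem.
*)

lemma bal_nonneg_less_Suc: "0 \<le> bal m \<and> bal m < bal (Suc m)"
  by (induction m rule: bal.induct) auto

lemma bal_nonneg: "0 \<le> bal m"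
  using bal_nonneg_less_Suc by blast

lemma bal_pos: "0 < m \<Longrightarrow> 0 < bal m"
  using bal_nonneg_less_Suc[of "m - 1"] by simp

lemma sum_bal: "4 * (\<Sum>l=1..m. bal l) = bal (Suc m) - bal m - 1"
  by (induction m) simp_all

lemma cobal_Suc_eq_sum_bal: "cobal (Suc m) = 2 * (\<Sum>l=1..m. bal l)"
proof (induction m rule: bal.induct)
  case (3 m)
  then show ?case using sum_bal[of m] sum_bal[of "Suc m"] by simp
qed simp_all

lemma bal_recurrence_unique:
  fixes f :: "nat \<Rightarrow> 'a::comm_ring_1"
  assumes "f 0 = 0" and "\<And>k. k + 2 \<le> n \<Longrightarrow> f (k + 2) = 6 * f (k + 1) - f k"
  shows "k \<le> n \<Longrightarrow> f k = f 1 * of_int (bal k)"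
proof (induction k rule: bal.induct)
  case (3 m)
  then show ?case using assms(2)[of m] by (simp add: algebra_simps)
qed (simp_all add: assms(1))

lemma stationary_scale:
  assumes "stationary n P p"
  shows "stationary n P (\<lambda>i. c * p i)"
  unfolding stationary_def
proof (intro allI impI)
  fix j assume "j < n"
  then have "p j = (\<Sum>i<n. p i * P i j)"
    using assms unfolding stationary_def by blast
  then show "c * p j = (\<Sum>i<n. c * p i * P i j)"
    by (simp add: sum_distrib_left mult.assoc)
qed

lemma stationary_cong:
  assumes "\<And>i. i < n \<Longrightarrow> p i = p' i"
  shows "stationary n P p \<longleftrightarrow> stationary n P p'"
proof -
  have "(\<Sum>i<n. p i * P i j) = (\<Sum>i<n. p' i * P i j)" for j
    using assms by (intro sum.cong) auto
  then show ?thesis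
    unfolding stationary_def using assms by auto
qed

lemma sum_mult_delta:
  fixes f :: "'a \<Rightarrow> 'b::semiring_0"
  assumes "finite A"
  shows "(\<Sum>i\<in>A. f i * (if i = a then c else 0)) = (if a \<in> A then f a * c else 0)"
proof -
  have "(\<Sum>i\<in>A. f i * (if i = a then c else 0)) = (\<Sum>i\<in>A. if i = a then f a * c else 0)"
    by (rule sum.cong) auto
  then show ?thesis using assms by simp
qed

lemma trans_mat_col_0:
  assumes "3 \<le> n" "i < n"
  shows "trans_mat n q i 0 =
    4*q + (if i = 0 then 1 - 5*q else 0) + (if i = 1 then q else 0) + (if i = n - 1 then q else 0)"
proof -
  consider "i = 0" | "i = 1" | "2 \<le> i" "i \<le> n - 2" | "i = n - 1" using assms by linarith
  then show ?thesis using assms by cases (auto simp: trans_mat_def)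
qed

lemma trans_mat_col:
  assumes "3 \<le> n" "i < n" "1 \<le> j" "j < n"
  shows "trans_mat n q i j =
    (if i = j - 1 then q else 0) + (if i = j then 1 - 6*q else 0) + (if i = j + 1 then q else 0)"
proof -
  consider "i = 0" | "i = 1" | "2 \<le> i" "i \<le> n - 2" | "i = n - 1" using assms by linarith
  then show ?thesis using assms by cases (auto simp: trans_mat_def split: if_splits)
qed

lemma sum_trans_mat_col_0:
  assumes "3 \<le> n"
  shows "(\<Sum>i<n. p i * trans_mat n q i 0) =
    4*q * (\<Sum>i<n. p i) + (1 - 5*q) * p 0 + q * p 1 + q * p (n - 1)"
  using assms
  by (simp add: trans_mat_col_0 distrib_left sum.distrib sum_distrib_right sum_mult_delta
      mult.commute)

lemma sum_trans_mat_col: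
  assumes "3 \<le> n" "1 \<le> j" "j < n"
  shows "(\<Sum>i<n. p i * trans_mat n q i j) =
    q * p (j - 1) + (1 - 6*q) * p j + (if j + 1 < n then q * p (j + 1) else 0)"
  using assms
  by (simp add: trans_mat_col distrib_left sum.distrib sum_mult_delta mult.commute
      less_imp_diff_less)

lemma sum_lessThan_diff_eq_sum_atLeastAtMost:
  fixes n :: nat
  shows "(\<Sum>i<n. f (n - i)) = (\<Sum>l=1..n. f l)"
proof -
  have "(\<Sum>i<n. f (n - i)) = (\<Sum>l=1..n. f (n - (n - l)))"
    using sum.atLeastLessThan_rev_at_least_Suc_atMost[of "\<lambda>i. f (n - i)" 0 n]
    by (simp add: atLeast0LessThan)
  also have "\<dots> = (\<Sum>l=1..n. f l)"
    by (rule sum.cong) auto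
  finally show ?thesis .
qed

lemma stationary_trans_mat_imp_bal:
  assumes "3 \<le> n" "0 < q" "stationary n (trans_mat n q) p" "i < n"
  shows "p i = p (n - 1) * of_int (bal (n - i))"
proof -
  \<comment> \<open>f k is pi(n-k); f 0 = 0 plays the missing right neighbour of the last state.\<close>
  define f where "f k = (if k = 0 then 0 else p (n - k))" for k
  have "f (k + 2) = 6 * f (k + 1) - f k" if "k + 2 \<le> n" for k
  proof -
    define j where "j = n - (k + 1)"
    have j: "1 \<le> j" "j < n" using that by (auto simp: j_def)
    with assms(3) have "p j = (\<Sum>i<n. p i * trans_mat n q i j)"
      unfolding stationary_def by blast
    also have "\<dots> = q * p (j - 1) + (1 - 6*q) * p j + (if j + 1 < n then q * p (j + 1) else 0)"
      using assms(1) j by (rule sum_trans_mat_col)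
    finally have "q * p (j - 1) = q * (6 * p j - (if j + 1 < n then p (j + 1) else 0))"
      by (simp add: algebra_simps)
    then have "p (j - 1) = 6 * p j - (if j + 1 < n then p (j + 1) else 0)"
      using assms(2) by simp
    moreover have "j - 1 = n - (k + 2)" "j + 1 = n - k" "j + 1 < n \<longleftrightarrow> k \<noteq> 0"
      using that by (auto simp: j_def)
    ultimately show ?thesis using that by (simp add: f_def j_def)
  qed
  then have "f k = f 1 * of_int (bal k)" if "k \<le> n" for k
    using bal_recurrence_unique[of f n k] that by (simp add: f_def)
  from this[of "n - i"] show ?thesis using assms(4) by (simp add: f_def)
qed

lemma stationary_trans_mat_bal:
  assumes "3 \<le> n"
  shows "stationary n (trans_mat n q) (\<lambda>i. of_int (bal (n - i)))"
  unfolding stationary_def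
proof (intro allI impI)
  fix j assume "j < n"
  show "of_int (bal (n - j)) = (\<Sum>i<n. of_int (bal (n - i)) * trans_mat n q i j)"
  proof (cases "j = 0")
    case True
    have "bal (Suc n) = 6 * bal n - bal (n - 1)"
      using assms by (cases n) simp_all
    then have "4 * (\<Sum>l=1..n. bal l) = 5 * bal n - bal (n - 1) - 1"
      using sum_bal[of n] by simp
    from arg_cong[OF this, of real_of_int]
    have four_sum: "4 * (\<Sum>i<n. real_of_int (bal (n - i))) = 5 * bal n - bal (n - 1) - 1"
      using sum_lessThan_diff_eq_sum_atLeastAtMost[of "\<lambda>l. real_of_int (bal l)" n] by simp
    have "(\<Sum>i<n. of_int (bal (n - i)) * trans_mat n q i j)
        = q * (4 * (\<Sum>i<n. real_of_int (bal (n - i))))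
          + (1 - 5*q) * bal n + q * bal (n - 1) + q"
      using True assms sum_trans_mat_col_0[of n "\<lambda>i. of_int (bal (n - i))" q]
      by (simp add: algebra_simps)
    also have "\<dots> = bal n"
      unfolding four_sum by (simp add: algebra_simps)
    finally show ?thesis using True by simp
  next
    case False
    define m where "m = n - (j + 1)"
    have m: "n - j = Suc m" "n - (j - 1) = Suc (Suc m)"
      using False \<open>j < n\<close> by (simp_all add: m_def)
    have "(if j + 1 < n then q * of_int (bal (n - (j + 1))) else 0) = q * of_int (bal m)"
      by (simp add: m_def)
    then have "(\<Sum>i<n. of_int (bal (n - i)) * trans_mat n q i j)
        = q * bal (Suc (Suc m)) + (1 - 6*q) * bal (Suc m) + q * bal m"
      using False \<open>j < n\<close> assms m sum_trans_mat_col[of n j "\<lambda>i. of_int (bal (n - i))" q]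
      by simp
    also have "\<dots> = bal (Suc m)"
      by (simp add: algebra_simps)
    finally show ?thesis using m by simp
  qed
qed

lemma stationary_distribution_trans_mat_iff:
  assumes "3 \<le> n" "0 < q"
  shows "prob_vec n p \<and> stationary n (trans_mat n q) p \<longleftrightarrow>
         (\<forall>i<n. p i = of_int (bal (n - i)) / (\<Sum>l=1..n. of_int (bal l)))"
proof -
  define S where "S = (\<Sum>l=1..n. real_of_int (bal l))"
  have "0 < S"
    unfolding S_def using assms(1) by (intro sum_pos) (simp_all add: bal_pos)
  have sum_bal_rev: "(\<Sum>i<n. real_of_int (bal (n - i))) = S"
    unfolding S_def by (rule sum_lessThan_diff_eq_sum_atLeastAtMost)
  have "prob_vec n p \<and> stationary n (trans_mat n q) p \<longleftrightarrow>
        (\<forall>i<n. p i = of_int (bal (n - i)) / S)"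
  proof
    assume p: "prob_vec n p \<and> stationary n (trans_mat n q) p"
    have bal_form: "p i = p (n - 1) * of_int (bal (n - i))" if "i < n" for i
      using stationary_trans_mat_imp_bal[OF assms] p that by blast
    have "1 = (\<Sum>i<n. p i)"
      using p by (simp add: prob_vec_def)
    also have "\<dots> = (\<Sum>i<n. p (n - 1) * of_int (bal (n - i)))"
      by (intro sum.cong refl bal_form) simp
    also have "\<dots> = p (n - 1) * S"
      by (simp only: sum_distrib_left[symmetric] sum_bal_rev)
    finally have "p (n - 1) = 1 / S"
      using \<open>0 < S\<close> by (simp add: field_simps)
    then show "\<forall>i<n. p i = of_int (bal (n - i)) / S"
      using bal_form by simp
  next
    assume p: "\<forall>i<n. p i = of_int (bal (n - i)) / S"
    have "stationary n (trans_mat n q) (\<lambda>i. 1 / S * of_int (bal (n - i)))"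
      using stationary_trans_mat_bal[OF assms(1)] by (rule stationary_scale)
    moreover have "stationary n (trans_mat n q) p \<longleftrightarrow>
        stationary n (trans_mat n q) (\<lambda>i. 1 / S * of_int (bal (n - i)))"
      using p by (intro stationary_cong) simp
    ultimately have "stationary n (trans_mat n q) p"
      by blast
    moreover have "prob_vec n p"
      using p \<open>0 < S\<close> sum_bal_rev
      by (simp add: prob_vec_def bal_nonneg sum_divide_distrib[symmetric])
    ultimately show "prob_vec n p \<and> stationary n (trans_mat n q) p"
      by blast
  qed
  then show ?thesis
    unfolding S_def .
qed

theorem theorem2p2:
  fixes n :: nat and q :: real
  assumes "n \<ge> 3" and "0 < q" and "q \<le> 1/6"
  shows "(\<forall>p :: nat \<Rightarrow> real.
            (prob_vec n p \<and> stationary n (trans_mat n q) p) \<longleftrightarrow>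
            (\<forall>i<n. p i = 2 * real_of_int (bal (n - i)) / real_of_int (cobal (n + 1))))
       \<and> (\<forall>i<n. 2 * real_of_int (bal (n - i)) / real_of_int (cobal (n + 1))
                 = real_of_int (bal (n - i)) / (\<Sum>l=1..n. real_of_int (bal l)))"
proof -
  \<comment> \<open>The bound q \<le> 1/6 only makes P(q) stochastic; the computation does not need it.\<close>
  have "real_of_int (cobal (n + 1)) = 2 * (\<Sum>l=1..n. real_of_int (bal l))"
    using cobal_Suc_eq_sum_bal[of n] by simp
  then have cobal_form: "2 * real_of_int (bal (n - i)) / real_of_int (cobal (n + 1))
      = real_of_int (bal (n - i)) / (\<Sum>l=1..n. real_of_int (bal l))" for i
    by simp
  show ?thesis
    unfolding cobal_form using stationary_distribution_trans_mat_iff[OF assms(1,2)] by simp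
qed

end
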